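(* For any $\theta=(B,\Omega)$ and $\psi_i=(m_i,s_i)$, $\big[\nabla_{\mathrm{vec}(B)\psi_i}J_i(\nabla_{\psi_i\psi_i}J_i)^{-1}\nabla_{\psi_i\mathrm{vec}(B)}J_i\big](\theta,\psi_i)=-(D_{\tilde a_i}^{1/2}E_iD_{\tilde a_i}^{1/2})\otimes x_ix_i^\top$, where $E_i=G_i+(I_p-G_i)C_i(I_p-G_i)$, $G_i=D_{s_i}\Lambda_iD_{s_i}$, $\Lambda_i=\big(I_p+D_{s_i}^2(D_{\tilde a_i}+D_{\tilde a_i}D_{s_i}^2+\Omega_D)\big)^{-1}D_{\tilde a_i}D_{s_i}^2$ and $C_i=\big(I_p+D_{\tilde a_i}^{-1/2}\Omega D_{\tilde a_i}^{-1/2}-D_{s_i}\Lambda_iD_{s_i}\big)^{-1}$.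
   Context: PLN model, observation $i$ with counts $Y_i\in\mathbb N^p$, covariate $x_i\in\mathbb R^m$, offset $o_i\in\mathbb R^p$; $B\in\mathcal M_{m,p}(\mathbb R)$ (columns $B_j$), $\Omega$ symmetric positive definite. Variational parameter $\psi_i=(m_i,s_i)\in\mathbb R^p\times(0,\infty)^p$. Single-observation ELBO: $J_i(\theta,\psi_i)=Y_i^\top(o_i+m_i+B^\top x_i)-\tilde a_i^\top1_p-\sum_j\log(Y_{ij}!)+\frac12\log|\Omega|-\frac12m_i^\top\Omega m_i-\frac12\mathrm{diag}(\Omega)^\top s_i^2+\sum_j\log s_{ij}+\frac p2$, $\tilde a_{ij}=\exp(o_{ij}+x_i^\top B_j+m_{ij}+s_{ij}^2/2)$. $\mathrm{vec}(B)$ stacks the columns of $B$. Notation: $D_v=\mathrm{Diag}(v)$, $\Omega_D=I_p\odot\Omega$, $\otimes$ Kronecker product. *)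

theory Defs
  imports "HOL-Analysis.Analysis"
begin

text \<open>Matrices are Cartesian-product matrices; B :: real^'p^'m has rows indexed by 'm
(covariates) and columns B_j indexed by 'p.\<close>

definition col_of :: "'p::finite \<Rightarrow> real^'p^'m::finite \<Rightarrow> real^'m" where
  "col_of j B = (\<chi> k. B $ k $ j)"

definition Dg :: "real^'p::finite \<Rightarrow> real^'p^'p" where
  "Dg v = (\<chi> i j. if i = j then v $ i else 0)"

definition diag_part :: "real^'p::finite^'p \<Rightarrow> real^'p^'p" where
  "diag_part A = (\<chi> i j. if i = j then A $ i $ j else 0)"

definition pos_def :: "real^'p::finite^'p \<Rightarrow> bool" where
  "pos_def A \<longleftrightarrow> (\<forall>v. v \<noteq> 0 \<longrightarrow> v \<bullet> (A *v v) > 0)"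

definition atil :: "real^'p::finite \<Rightarrow> real^'m::finite \<Rightarrow> real^'p^'m \<Rightarrow> real^'p \<Rightarrow> real^'p \<Rightarrow> real^'p" where
  "atil off x B m s = (\<chi> j. exp (off $ j + x \<bullet> col_of j B + m $ j + (s $ j)^2 / 2))"

definition ELBO :: "nat^'p::finite \<Rightarrow> real^'p \<Rightarrow> real^'m::finite \<Rightarrow> real^'p^'m \<Rightarrow> real^'p^'p
    \<Rightarrow> real^'p \<Rightarrow> real^'p \<Rightarrow> real" where
  "ELBO Y off x B \<Omega> m s =
     (\<Sum>j\<in>UNIV. real (Y $ j) * (off $ j + m $ j + x \<bullet> col_of j B))
     - (\<Sum>j\<in>UNIV. atil off x B m s $ j)
     - (\<Sum>j\<in>UNIV. ln (fact (Y $ j)))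
     + ln (det \<Omega>) / 2
     - (m \<bullet> (\<Omega> *v m)) / 2
     - (\<Sum>j\<in>UNIV. \<Omega> $ j $ j * (s $ j)^2) / 2
     + (\<Sum>j\<in>UNIV. ln (s $ j))
     + real CARD('p) / 2"

definition vecB :: "real^'p::finite^'m::finite \<Rightarrow> real^('p \<times> 'm)" where
  "vecB B = (\<chi> i. B $ snd i $ fst i)"

definition unvecB :: "real^('p::finite \<times> 'm::finite) \<Rightarrow> real^'p^'m" where
  "unvecB b = (\<chi> k j. b $ (j,k))"

definition psi_of :: "real^'p::finite \<Rightarrow> real^'p \<Rightarrow> real^('p + 'p)" where
  "psi_of m s = (\<chi> l. case l of Inl j \<Rightarrow> m $ j | Inr j \<Rightarrow> s $ j)"

definition ELBOv :: "nat^'p::finite \<Rightarrow> real^'p \<Rightarrow> real^'m::finite \<Rightarrow> real^'p^'p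
    \<Rightarrow> real^('p \<times> 'm) \<Rightarrow> real^('p + 'p) \<Rightarrow> real" where
  "ELBOv Y off x \<Omega> b \<psi> = ELBO Y off x (unvecB b) \<Omega> (\<chi> j. \<psi> $ Inl j) (\<chi> j. \<psi> $ Inr j)"

definition hess_Bpsi :: "(real^('p::finite \<times> 'm::finite) \<Rightarrow> real^('p + 'p) \<Rightarrow> real)
    \<Rightarrow> real^('p \<times> 'm) \<Rightarrow> real^('p + 'p) \<Rightarrow> real^('p + 'p)^('p \<times> 'm)" where
  "hess_Bpsi F b \<psi> = (\<chi> a l. deriv (\<lambda>t. deriv (\<lambda>u.
      F (b + t *\<^sub>R axis a 1) (\<psi> + u *\<^sub>R axis l 1)) 0) 0)"

definition hess_psiB :: "(real^('p::finite \<times> 'm::finite) \<Rightarrow> real^('p + 'p) \<Rightarrow> real)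
    \<Rightarrow> real^('p \<times> 'm) \<Rightarrow> real^('p + 'p) \<Rightarrow> real^('p \<times> 'm)^('p + 'p)" where
  "hess_psiB F b \<psi> = (\<chi> l a. deriv (\<lambda>t. deriv (\<lambda>u.
      F (b + u *\<^sub>R axis a 1) (\<psi> + t *\<^sub>R axis l 1)) 0) 0)"

definition hess_psipsi :: "(real^('p::finite \<times> 'm::finite) \<Rightarrow> real^('p + 'p) \<Rightarrow> real)
    \<Rightarrow> real^('p \<times> 'm) \<Rightarrow> real^('p + 'p) \<Rightarrow> real^('p + 'p)^('p + 'p)" where
  "hess_psipsi F b \<psi> = (\<chi> l l'. deriv (\<lambda>t. deriv (\<lambda>u.
      F b (\<psi> + t *\<^sub>R axis l 1 + u *\<^sub>R axis l' 1)) 0) 0)"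

text \<open>Kronecker product, indices ordered consistently with vec.\<close>
definition kron :: "real^'p::finite^'p \<Rightarrow> real^'m::finite^'m \<Rightarrow> real^('p \<times> 'm)^('p \<times> 'm)" where
  "kron A M = (\<chi> i i'. A $ fst i $ fst i' * M $ snd i $ snd i')"

definition outer :: "real^'m::finite \<Rightarrow> real^'m^'m" where
  "outer x = (\<chi> k k'. x $ k * x $ k')"

definition Lambda_i :: "real^'p::finite^'p \<Rightarrow> real^'p \<Rightarrow> real^'p \<Rightarrow> real^'p^'p" where
  "Lambda_i \<Omega> a s =
     matrix_inv (mat 1 + Dg (\<chi> j. (s$j)^2) **
        (Dg a + Dg a ** Dg (\<chi> j. (s$j)^2) + diag_part \<Omega>))
     ** Dg a ** Dg (\<chi> j. (s$j)^2)"

definition G_i :: "real^'p::finite^'p \<Rightarrow> real^'p \<Rightarrow> real^'p \<Rightarrow> real^'p^'p" where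
  "G_i \<Omega> a s = Dg s ** Lambda_i \<Omega> a s ** Dg s"

definition C_i :: "real^'p::finite^'p \<Rightarrow> real^'p \<Rightarrow> real^'p \<Rightarrow> real^'p^'p" where
  "C_i \<Omega> a s = matrix_inv (mat 1 + Dg (\<chi> j. 1 / sqrt (a$j)) ** \<Omega> ** Dg (\<chi> j. 1 / sqrt (a$j))
                            - Dg s ** Lambda_i \<Omega> a s ** Dg s)"

definition E_i :: "real^'p::finite^'p \<Rightarrow> real^'p \<Rightarrow> real^'p \<Rightarrow> real^'p^'p" where
  "E_i \<Omega> a s = G_i \<Omega> a s + (mat 1 - G_i \<Omega> a s) ** C_i \<Omega> a s ** (mat 1 - G_i \<Omega> a s)"

end

theory Submission
  imports Defs
begin

text \<open>
  Along a line J_i is an explicit function, so its second directional derivatives follow from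
  one-variable calculus. Writing a for atil, the \<psi>\<psi>-Hessian is -M with
  M = [[D_a + \<Omega>, D_as], [D_as, D_q]], q = a (s^2 + 1) + diag \<Omega> + 1/s^2, and the
  (vec B, \<psi>)-Hessian is -(L \<otimes> x) with L = [D_a, D_as]. Hence the left-hand side equals
  -(L M^-1 L^T) \<otimes> x x^T. The matrix M is positive definite (J_i is strictly concave in \<psi>), and
  M X = L^T is solved by eliminating the s-block: as G_i = D_(a s^2 / q), the Schur complement is
  D_a + \<Omega> - D_as D_q^-1 D_as = D_a^(1/2) C_i^-1 D_a^(1/2). This gives the m-block
  X_m = D_a^(-1/2) C_i (I - G_i) D_a^(1/2) and L X = D_a^(1/2) E_i D_a^(1/2).
\<close>

lemma matrix_add_rdistrib: "((A::'a::semiring_1^'n^'m) + B) ** C = A ** C + B ** C"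
  by (simp add: matrix_matrix_mult_def vec_eq_iff sum.distrib distrib_right)

lemma matrix_diff_rdistrib: "((A::'a::ring_1^'n^'m) - B) ** C = A ** C - B ** C"
  by (simp add: matrix_matrix_mult_def vec_eq_iff sum_subtractf left_diff_distrib)

lemma matrix_diff_ldistrib: "(A::'a::ring_1^'n^'m) ** (B - C) = A ** B - A ** C"
  by (simp add: matrix_matrix_mult_def vec_eq_iff sum_subtractf right_diff_distrib)

lemma matrix_mul_uminus_left [simp]: "(- (A::'a::ring_1^'n^'m)) ** B = - (A ** B)"
  by (simp add: matrix_matrix_mult_def vec_eq_iff sum_negf)

lemma matrix_mul_uminus_right [simp]: "(A::'a::ring_1^'n^'m) ** (- B) = - (A ** B)"
  by (simp add: matrix_matrix_mult_def vec_eq_iff sum_negf)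

lemma matrix_inv_eqI:
  fixes A B :: "'a::field^'n^'n"
  assumes "A ** B = mat 1"
  shows "matrix_inv A = B"
proof -
  have BA: "B ** A = mat 1"
    using assms matrix_left_right_inverse by blast
  have "A ** matrix_inv A = mat 1 \<and> matrix_inv A ** A = mat 1"
    unfolding matrix_inv_def by (rule someI[of _ B]) (simp add: assms BA)
  then have "B ** (A ** matrix_inv A) = B"
    by simp
  then show ?thesis
    by (simp add: matrix_mul_assoc BA)
qed

lemma matrix_inv_mult_self:
  fixes A :: "'a::field^'n^'n"
  assumes "\<And>v. A *v v = 0 \<Longrightarrow> v = 0"
  shows "matrix_inv A ** A = mat 1"
proof -
  have "\<exists>B. B ** A = mat 1"
    unfolding matrix_left_invertible_ker using assms by blast
  then obtain B where BA: "B ** A = mat 1" ..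
  then have "A ** B = mat 1"
    by (subst matrix_left_right_inverse)
  then show ?thesis
    by (simp add: matrix_inv_eqI BA)
qed

lemma matrix_inv_mult_eqI:
  fixes A :: "'a::field^'n^'n"
  assumes "\<And>v. A *v v = 0 \<Longrightarrow> v = 0" and "A ** X = C"
  shows "matrix_inv A ** C = X"
proof -
  have "matrix_inv A ** (A ** X) = X"
    by (simp add: matrix_mul_assoc matrix_inv_mult_self[OF assms(1)])
  then show ?thesis
    by (simp add: assms(2))
qed

lemma matrix_inv_uminus:
  fixes A :: "'a::field^'n^'n"
  assumes "\<And>v. A *v v = 0 \<Longrightarrow> v = 0"
  shows "matrix_inv (- A) = - matrix_inv A"
proof (rule matrix_inv_eqI)
  have "A ** matrix_inv A = mat 1"
    by (subst matrix_left_right_inverse) (rule matrix_inv_mult_self[OF assms])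
  then show "- A ** - matrix_inv A = mat 1"
    by simp
qed

lemma symmetric_matrix_inner_commute:
  fixes A :: "real^'n::finite^'n"
  assumes "transpose A = A"
  shows "u \<bullet> (A *v w) = w \<bullet> (A *v u)"
  by (metis assms dot_lmul_matrix inner_commute transpose_matrix_vector)

lemma inner_axis_mult_axis: "axis i 1 \<bullet> ((A::real^'n::finite^'m::finite) *v axis j 1) = A $ i $ j"
  by (simp add: matrix_vector_mult_basis inner_axis' column_def)

lemma pos_def_diag_pos:
  assumes "pos_def A"
  shows "0 < A $ i $ i"
proof -
  have "0 < axis i 1 \<bullet> (A *v axis i 1)"
    using assms by (simp add: pos_def_def axis_eq_0_iff)
  then show ?thesis
    by (simp add: inner_axis_mult_axis)
qed

lemma pos_def_nonneg: "pos_def A \<Longrightarrow> 0 \<le> v \<bullet> (A *v v)"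
  by (cases "v = 0") (auto simp: pos_def_def less_imp_le)

lemma pos_def_ker: "pos_def A \<Longrightarrow> A *v v = 0 \<Longrightarrow> v = 0"
  by (metis inner_zero_right less_irrefl pos_def_def)

lemma Dg_nth: "Dg v $ i $ j = (if i = j then v $ i else 0)"
  by (simp add: Dg_def)

lemma Dg_mult_left [simp]: "(Dg v ** A) $ i $ j = v $ i * A $ i $ j"
  by (simp add: Dg_def matrix_matrix_mult_def if_distrib if_distribR cong: if_cong)

lemma Dg_mult_right [simp]: "(A ** Dg v) $ i $ j = A $ i $ j * v $ j"
  by (simp add: Dg_def matrix_matrix_mult_def if_distrib if_distribR cong: if_cong)

lemma Dg_mult_Dg: "Dg u ** Dg v = Dg (\<chi> i. u $ i * v $ i)"
  by (simp add: vec_eq_iff Dg_nth)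

lemma Dg_1: "Dg (\<chi> i. 1) = mat 1"
  by (simp add: vec_eq_iff Dg_nth mat_def)

lemma transpose_Dg [simp]: "transpose (Dg v) = Dg v"
  by (simp add: vec_eq_iff transpose_def Dg_nth)

lemma Dg_mult_vec: "Dg v *v w = (\<chi> i. v $ i * w $ i)"
  by (simp add: vec_eq_iff Dg_def matrix_vector_mult_def if_distrib if_distribR cong: if_cong)

lemma inner_Dg: "u \<bullet> (Dg v *v w) = (\<Sum>i\<in>UNIV. v $ i * u $ i * w $ i)"
  by (simp add: Dg_mult_vec inner_vec_def mult_ac)

lemma inner_Dg_commute: "u \<bullet> (Dg v *v w) = (Dg v *v u) \<bullet> w"
  by (simp add: Dg_mult_vec inner_vec_def mult_ac)

lemma matrix_inv_Dg:
  assumes "\<And>i. v $ i \<noteq> 0"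
  shows "matrix_inv (Dg v) = Dg (\<chi> i. 1 / v $ i)"
  by (rule matrix_inv_eqI) (simp add: Dg_mult_Dg assms Dg_1[symmetric])

lemma Dg_sqrt:
  assumes "\<forall>j. a $ j > 0"
  shows "Dg (\<chi> j. sqrt (a $ j)) ** Dg (\<chi> j. 1 / sqrt (a $ j)) = mat 1"
    and "Dg (\<chi> j. 1 / sqrt (a $ j)) ** Dg (\<chi> j. sqrt (a $ j)) = mat 1"
    and "Dg (\<chi> j. sqrt (a $ j)) ** Dg (\<chi> j. sqrt (a $ j)) = Dg a"
  using assms by (simp_all add: Dg_mult_Dg less_imp_le less_imp_neq[symmetric] flip: Dg_1)

section \<open>Block matrices\<close>

definition inl_part :: "'a^('n::finite + 'k::finite) \<Rightarrow> 'a^'n" where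
  "inl_part v = (\<chi> i. v $ Inl i)"

definition inr_part :: "'a^('n::finite + 'k::finite) \<Rightarrow> 'a^'k" where
  "inr_part v = (\<chi> i. v $ Inr i)"

lemma inl_part_nth [simp]: "inl_part v $ i = v $ Inl i"
  by (simp add: inl_part_def)

lemma inr_part_nth [simp]: "inr_part v $ i = v $ Inr i"
  by (simp add: inr_part_def)

lemma inl_part_0 [simp]: "inl_part 0 = 0"
  by (simp add: vec_eq_iff)

lemma inr_part_0 [simp]: "inr_part 0 = 0"
  by (simp add: vec_eq_iff)

lemma inl_part_add [simp]: "inl_part (v + w) = inl_part v + inl_part w"
  by (simp add: vec_eq_iff)

lemma inr_part_add [simp]: "inr_part (v + w) = inr_part v + inr_part w"
  by (simp add: vec_eq_iff)

lemma inl_part_scaleR [simp]: "inl_part (t *\<^sub>R v) = t *\<^sub>R inl_part v"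
  by (simp add: vec_eq_iff)

lemma inr_part_scaleR [simp]: "inr_part (t *\<^sub>R v) = t *\<^sub>R inr_part v"
  by (simp add: vec_eq_iff)

lemma block_vec_eq_0_iff: "v = 0 \<longleftrightarrow> inl_part v = 0 \<and> inr_part v = 0"
  by (simp add: vec_eq_iff split_sum_all)

lemma sum_UNIV_Plus:
  fixes f :: "'n::finite + 'k::finite \<Rightarrow> 'a::comm_monoid_add"
  shows "(\<Sum>l\<in>UNIV. f l) = (\<Sum>i\<in>UNIV. f (Inl i)) + (\<Sum>i\<in>UNIV. f (Inr i))"
  using sum.Plus[of "UNIV::'n set" "UNIV::'k set" f]
  by (simp add: comp_def)

definition block_matrix :: "'a^'n^'m \<Rightarrow> 'a^'k^'m \<Rightarrow> 'a^'n^'l \<Rightarrow> 'a^'k^'l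
    \<Rightarrow> 'a^('n::finite + 'k::finite)^('m::finite + 'l::finite)" where
  "block_matrix A B C D = (\<chi> r c. case r of
      Inl i \<Rightarrow> (case c of Inl j \<Rightarrow> A $ i $ j | Inr j \<Rightarrow> B $ i $ j)
    | Inr i \<Rightarrow> (case c of Inl j \<Rightarrow> C $ i $ j | Inr j \<Rightarrow> D $ i $ j))"

definition block_col :: "'a^'c^'n \<Rightarrow> 'a^'c^'k \<Rightarrow> 'a^'c::finite^('n::finite + 'k::finite)" where
  "block_col X Y = (\<chi> r. case r of Inl i \<Rightarrow> X $ i | Inr i \<Rightarrow> Y $ i)"

definition block_row :: "'a^'n^'m \<Rightarrow> 'a^'k^'m \<Rightarrow> 'a^('n::finite + 'k::finite)^'m::finite" where
  "block_row L R = (\<chi> i c. case c of Inl j \<Rightarrow> L $ i $ j | Inr j \<Rightarrow> R $ i $ j)"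

lemma block_matrix_mult_block_col:
  fixes A :: "'a::semiring_1^'n::finite^'m::finite"
  shows "block_matrix A B C D ** block_col X Y = block_col (A ** X + B ** Y) (C ** X + D ** Y)"
  by (simp add: vec_eq_iff block_matrix_def block_col_def matrix_matrix_mult_def sum_UNIV_Plus
      split: sum.split)

lemma block_row_mult_block_col:
  fixes L :: "'a::semiring_1^'n::finite^'m::finite"
  shows "block_row L R ** block_col X Y = L ** X + R ** Y"
  by (simp add: vec_eq_iff block_row_def block_col_def matrix_matrix_mult_def sum_UNIV_Plus)

lemma transpose_block_row: "transpose (block_row L R) = block_col (transpose L) (transpose R)"
  by (simp add: vec_eq_iff block_row_def block_col_def transpose_def split: sum.split)

lemma block_row_mult_vec: "block_row L R *v v = L *v inl_part v + R *v inr_part v"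
  by (simp add: vec_eq_iff block_row_def matrix_vector_mult_def sum_UNIV_Plus)

lemma inner_block_matrix:
  fixes A :: "real^'n::finite^'m::finite"
  shows "v \<bullet> (block_matrix A B C D *v w) =
    inl_part v \<bullet> (A *v inl_part w) + inl_part v \<bullet> (B *v inr_part w)
    + inr_part v \<bullet> (C *v inl_part w) + inr_part v \<bullet> (D *v inr_part w)"
  by (simp add: inner_vec_def block_matrix_def matrix_vector_mult_def sum_UNIV_Plus
      sum.distrib distrib_left)

definition kron_vec :: "real^'c^'p \<Rightarrow> real^'m \<Rightarrow> real^'c^('p::finite \<times> 'm::finite)" where
  "kron_vec L x = (\<chi> i c. L $ fst i $ c * x $ snd i)"

lemma kron_vec_mult_transpose:
  fixes L R :: "real^'c::finite^'p::finite" and x :: "real^'m::finite"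
  shows "kron_vec L x ** Y ** transpose (kron_vec R x) = kron (L ** Y ** transpose R) (outer x)"
  by (simp add: vec_eq_iff kron_vec_def kron_def outer_def matrix_matrix_mult_def transpose_def
      sum_distrib_left sum_distrib_right mult_ac)

section \<open>Directional derivatives of the ELBO\<close>

lemma col_of_add [simp]: "col_of j (A + B) = col_of j A + col_of j B"
  by (simp add: col_of_def vec_eq_iff)

lemma col_of_scaleR [simp]: "col_of j (c *\<^sub>R A) = c *\<^sub>R col_of j A"
  by (simp add: col_of_def vec_eq_iff)

lemma col_of_0 [simp]: "col_of j 0 = 0"
  by (simp add: col_of_def vec_eq_iff)

lemma quadratic_form_line:
  fixes A :: "real^'n::finite^'n"
  shows "(v + u *\<^sub>R w) \<bullet> (A *v (v + u *\<^sub>R w)) =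
    v \<bullet> (A *v v) + u * (w \<bullet> (A *v v) + v \<bullet> (A *v w)) + u^2 * (w \<bullet> (A *v w))"
  by (simp add: algebra_simps power2_eq_square)

definition log_atil_dir :: "real^'m::finite \<Rightarrow> real^'p::finite \<Rightarrow> real^'p^'m \<Rightarrow> real^'p
    \<Rightarrow> real^'p \<Rightarrow> real^'p" where
  "log_atil_dir x s Bd md sd = (\<chi> j. x \<bullet> col_of j Bd + md $ j + s $ j * sd $ j)"

definition ELBO_dir_deriv :: "nat^'p::finite \<Rightarrow> real^'p \<Rightarrow> real^'m::finite \<Rightarrow> real^'p^'p
    \<Rightarrow> real^'p^'m \<Rightarrow> real^'p \<Rightarrow> real^'p
    \<Rightarrow> real^'p^'m \<Rightarrow> real^'p \<Rightarrow> real^'p \<Rightarrow> real" where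
  "ELBO_dir_deriv Y off x \<Omega> B m s Bd md sd =
     (\<Sum>j\<in>UNIV. real (Y $ j) * (md $ j + x \<bullet> col_of j Bd))
     - (\<Sum>j\<in>UNIV. atil off x B m s $ j * log_atil_dir x s Bd md sd $ j)
     - (md \<bullet> (\<Omega> *v m) + m \<bullet> (\<Omega> *v md)) / 2
     - (\<Sum>j\<in>UNIV. \<Omega> $ j $ j * s $ j * sd $ j)
     + (\<Sum>j\<in>UNIV. sd $ j / s $ j)"

definition ELBO_dir_deriv2 :: "real^'p::finite \<Rightarrow> real^'m::finite \<Rightarrow> real^'p^'p
    \<Rightarrow> real^'p^'m \<Rightarrow> real^'p \<Rightarrow> real^'p
    \<Rightarrow> real^'p^'m \<Rightarrow> real^'p \<Rightarrow> real^'p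
    \<Rightarrow> real^'p^'m \<Rightarrow> real^'p \<Rightarrow> real^'p \<Rightarrow> real" where
  "ELBO_dir_deriv2 off x \<Omega> B m s Bd' md' sd' Bd md sd =
     - (\<Sum>j\<in>UNIV. atil off x B m s $ j *
          (log_atil_dir x s Bd' md' sd' $ j * log_atil_dir x s Bd md sd $ j + sd' $ j * sd $ j))
     - (md \<bullet> (\<Omega> *v md') + md' \<bullet> (\<Omega> *v md)) / 2
     - (\<Sum>j\<in>UNIV. (\<Omega> $ j $ j + 1 / (s $ j)^2) * sd' $ j * sd $ j)"

lemma ELBO_dir_deriv2_commute:
  "ELBO_dir_deriv2 off x \<Omega> B m s Bd' md' sd' Bd md sd
    = ELBO_dir_deriv2 off x \<Omega> B m s Bd md sd Bd' md' sd'"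
  by (simp add: ELBO_dir_deriv2_def mult_ac add_ac)

lemma ELBO_line_has_derivative:
  assumes "\<forall>j. s $ j > 0"
  shows "((\<lambda>u. ELBO Y off x (B + u *\<^sub>R Bd) \<Omega> (m + u *\<^sub>R md) (s + u *\<^sub>R sd))
           has_real_derivative ELBO_dir_deriv Y off x \<Omega> B m s Bd md sd) (at 0)"
  unfolding ELBO_def ELBO_dir_deriv_def atil_def log_atil_dir_def quadratic_form_line
  apply (simp add: inner_add_right)
  apply (rule derivative_eq_intros refl | simp add: assms)+
  apply (simp add: sum_divide_distrib mult_ac)
  done

lemma ELBO_dir_deriv_line_has_derivative:
  assumes "\<forall>j. s $ j > 0"
  shows "((\<lambda>t. ELBO_dir_deriv Y off x \<Omega> (B + t *\<^sub>R Bd') (m + t *\<^sub>R md') (s + t *\<^sub>R sd') Bd md sd)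
           has_real_derivative ELBO_dir_deriv2 off x \<Omega> B m s Bd' md' sd' Bd md sd) (at 0)"
proof -
  have "\<And>j. s $ j \<noteq> 0"
    using assms by (metis less_irrefl)
  then show ?thesis
    unfolding ELBO_dir_deriv_def ELBO_dir_deriv2_def atil_def log_atil_dir_def
    apply (simp add: inner_add_right inner_add_left matrix_vector_right_distrib matrix_vector_mult_scaleR)
    apply (rule derivative_eq_intros refl | simp)+
    apply (simp add: sum_negf power2_eq_square algebra_simps sum.distrib sum_subtractf)
    done
qed

lemma deriv_deriv_eqI:
  fixes G :: "real \<Rightarrow> real \<Rightarrow> real"
  assumes "open U" and "0 \<in> U"
    and "\<And>t. t \<in> U \<Longrightarrow> (G t has_real_derivative D t) (at 0)"
    and "(D has_real_derivative H) (at 0)"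
  shows "deriv (\<lambda>t. deriv (G t) 0) 0 = H"
proof -
  have "((\<lambda>t. deriv (G t) 0) has_real_derivative H) (at 0)"
    using assms(4,1,2) by (rule has_field_derivative_transform_within_open)
      (rule DERIV_imp_deriv[OF assms(3), symmetric])
  then show ?thesis
    by (rule DERIV_imp_deriv)
qed

lemma ELBO_second_dir_deriv:
  assumes "\<forall>j. s $ j > 0"
  shows "deriv (\<lambda>t. deriv (\<lambda>u. ELBO Y off x (B + t *\<^sub>R Bd' + u *\<^sub>R Bd) \<Omega>
      (m + t *\<^sub>R md' + u *\<^sub>R md) (s + t *\<^sub>R sd' + u *\<^sub>R sd)) 0) 0
    = ELBO_dir_deriv2 off x \<Omega> B m s Bd' md' sd' Bd md sd"
proof -
  define U where "U = (\<Inter>j. {t. 0 < (s + t *\<^sub>R sd') $ j})"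
  have "open U"
    unfolding U_def by (intro open_INT ballI finite open_Collect_less continuous_intros)
  moreover have "0 \<in> U"
    using assms by (simp add: U_def)
  ultimately show ?thesis
    by (rule deriv_deriv_eqI[OF _ _ _ ELBO_dir_deriv_line_has_derivative[OF assms]])
      (auto intro!: ELBO_line_has_derivative simp: U_def)
qed

section \<open>The Hessian blocks\<close>

definition s_curvature :: "real^'p::finite^'p \<Rightarrow> real^'p \<Rightarrow> real^'p \<Rightarrow> real^'p" where
  "s_curvature \<Omega> a s = (\<chi> j. a $ j * ((s $ j)^2 + 1) + \<Omega> $ j $ j + 1 / (s $ j)^2)"

definition psi_hessian :: "real^'p::finite^'p \<Rightarrow> real^'p \<Rightarrow> real^'p \<Rightarrow> real^('p + 'p)^('p + 'p)" where
  "psi_hessian \<Omega> a s = block_matrix (Dg a + \<Omega>) (Dg (\<chi> j. a $ j * s $ j))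
     (Dg (\<chi> j. a $ j * s $ j)) (Dg (s_curvature \<Omega> a s))"

definition psi_B_coupling :: "real^'p::finite \<Rightarrow> real^'p \<Rightarrow> real^('p + 'p)^'p" where
  "psi_B_coupling a s = block_row (Dg a) (Dg (\<chi> j. a $ j * s $ j))"

lemma ELBO_dir_deriv2_psi_psi:
  assumes "transpose \<Omega> = \<Omega>"
  shows "ELBO_dir_deriv2 off x \<Omega> B m s 0 (inl_part \<delta>') (inr_part \<delta>') 0 (inl_part \<delta>) (inr_part \<delta>)
    = - (\<delta>' \<bullet> (psi_hessian \<Omega> (atil off x B m s) s *v \<delta>))"
  using symmetric_matrix_inner_commute[OF assms, of "inl_part \<delta>" "inl_part \<delta>'"]
  by (simp add: ELBO_dir_deriv2_def log_atil_dir_def psi_hessian_def s_curvature_def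
      inner_block_matrix inner_Dg matrix_vector_mult_add_rdistrib inner_add_right
      algebra_simps sum.distrib sum_subtractf power2_eq_square)

lemma kron_vec_mult_vec_nth: "(kron_vec L x *v \<delta>) $ i = x $ snd i * (L *v \<delta>) $ fst i"
  by (simp add: kron_vec_def matrix_vector_mult_def sum_distrib_left mult_ac)

lemma inner_kron_vec:
  "\<beta> \<bullet> (kron_vec L x *v \<delta>) = (\<Sum>j\<in>UNIV. (x \<bullet> col_of j (unvecB \<beta>)) * (L *v \<delta>) $ j)"
proof -
  have "\<beta> \<bullet> (kron_vec L x *v \<delta>) = (\<Sum>j\<in>UNIV. \<Sum>k\<in>UNIV. \<beta> $ (j, k) * (x $ k * (L *v \<delta>) $ j))"
    by (simp add: inner_vec_def kron_vec_mult_vec_nth sum.cartesian_product split_def)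
  also have "\<dots> = (\<Sum>j\<in>UNIV. (x \<bullet> col_of j (unvecB \<beta>)) * (L *v \<delta>) $ j)"
    by (simp add: inner_vec_def col_of_def unvecB_def sum_distrib_left mult_ac)
  finally show ?thesis .
qed

lemma ELBO_dir_deriv2_B_psi:
  "ELBO_dir_deriv2 off x \<Omega> B m s (unvecB \<beta>) 0 0 0 (inl_part \<delta>) (inr_part \<delta>)
    = - (\<beta> \<bullet> (kron_vec (psi_B_coupling (atil off x B m s) s) x *v \<delta>))"
proof -
  have "(psi_B_coupling a s *v \<delta>) $ j = a $ j * (\<delta> $ Inl j + s $ j * \<delta> $ Inr j)" for a j
    by (simp add: psi_B_coupling_def block_row_mult_vec Dg_mult_vec distrib_left mult_ac)
  then show ?thesis
    by (simp add: ELBO_dir_deriv2_def log_atil_dir_def inner_kron_vec sum_negf mult_ac)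
qed

lemma unvecB_vecB [simp]: "unvecB (vecB B) = B"
  by (simp add: vec_eq_iff unvecB_def vecB_def)

lemma unvecB_0 [simp]: "unvecB 0 = 0"
  by (simp add: vec_eq_iff unvecB_def)

lemma unvecB_add [simp]: "unvecB (b + c) = unvecB b + unvecB c"
  by (simp add: vec_eq_iff unvecB_def)

lemma unvecB_scaleR [simp]: "unvecB (t *\<^sub>R b) = t *\<^sub>R unvecB b"
  by (simp add: vec_eq_iff unvecB_def)

lemma inl_part_psi_of [simp]: "inl_part (psi_of m s) = m"
  by (simp add: vec_eq_iff psi_of_def)

lemma inr_part_psi_of [simp]: "inr_part (psi_of m s) = s"
  by (simp add: vec_eq_iff psi_of_def)

lemma ELBOv_eq_ELBO: "ELBOv Y off x \<Omega> b \<psi> = ELBO Y off x (unvecB b) \<Omega> (inl_part \<psi>) (inr_part \<psi>)"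
  by (simp add: ELBOv_def inl_part_def inr_part_def)

lemma ELBOv_second_dir_deriv:
  assumes "\<forall>j. s $ j > 0"
  shows "deriv (\<lambda>t. deriv (\<lambda>u. ELBOv Y off x \<Omega> (vecB B + t *\<^sub>R \<beta>' + u *\<^sub>R \<beta>)
      (psi_of m s + t *\<^sub>R \<delta>' + u *\<^sub>R \<delta>)) 0) 0
    = ELBO_dir_deriv2 off x \<Omega> B m s (unvecB \<beta>') (inl_part \<delta>') (inr_part \<delta>')
        (unvecB \<beta>) (inl_part \<delta>) (inr_part \<delta>)"
  by (simp add: ELBOv_eq_ELBO ELBO_second_dir_deriv[OF assms])

lemma hess_psipsi_ELBOv:
  assumes "transpose \<Omega> = \<Omega>" and "\<forall>j. s $ j > 0"
  shows "hess_psipsi (ELBOv Y off x \<Omega>) (vecB B) (psi_of m s) = - psi_hessian \<Omega> (atil off x B m s) s"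
proof -
  have "hess_psipsi (ELBOv Y off x \<Omega>) (vecB B) (psi_of m s) $ l $ l'
      = ELBO_dir_deriv2 off x \<Omega> B m s 0 (inl_part (axis l 1)) (inr_part (axis l 1))
          0 (inl_part (axis l' 1)) (inr_part (axis l' 1))" for l l'
    using ELBOv_second_dir_deriv[OF assms(2), of Y off x \<Omega> B 0 0 m "axis l 1" "axis l' 1"]
    by (simp add: hess_psipsi_def)
  then show ?thesis
    by (simp add: vec_eq_iff ELBO_dir_deriv2_psi_psi[OF assms(1)] inner_axis_mult_axis)
qed

lemma hess_Bpsi_ELBOv:
  assumes "\<forall>j. s $ j > 0"
  shows "hess_Bpsi (ELBOv Y off x \<Omega>) (vecB B) (psi_of m s)
    = - kron_vec (psi_B_coupling (atil off x B m s) s) x"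
proof -
  have "hess_Bpsi (ELBOv Y off x \<Omega>) (vecB B) (psi_of m s) $ i $ l
      = ELBO_dir_deriv2 off x \<Omega> B m s (unvecB (axis i 1)) 0 0
          0 (inl_part (axis l 1)) (inr_part (axis l 1))"
    for i l
    using ELBOv_second_dir_deriv[OF assms, of Y off x \<Omega> B "axis i 1" 0 m 0 "axis l 1"]
    by (simp add: hess_Bpsi_def)
  then show ?thesis
    by (simp add: vec_eq_iff ELBO_dir_deriv2_B_psi inner_axis_mult_axis)
qed

lemma hess_psiB_ELBOv:
  assumes "\<forall>j. s $ j > 0"
  shows "hess_psiB (ELBOv Y off x \<Omega>) (vecB B) (psi_of m s)
    = - transpose (kron_vec (psi_B_coupling (atil off x B m s) s) x)"
proof -
  have "hess_psiB (ELBOv Y off x \<Omega>) (vecB B) (psi_of m s) $ l $ i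
      = ELBO_dir_deriv2 off x \<Omega> B m s 0 (inl_part (axis l 1)) (inr_part (axis l 1))
          (unvecB (axis i 1)) 0 0"
    for i l
    using ELBOv_second_dir_deriv[OF assms, of Y off x \<Omega> B 0 "axis i 1" m "axis l 1" 0]
    by (simp add: hess_psiB_def)
  then show ?thesis
    by (simp add: vec_eq_iff transpose_def ELBO_dir_deriv2_commute[of _ _ _ _ _ _ 0]
        ELBO_dir_deriv2_B_psi inner_axis_mult_axis)
qed

section \<open>Solving the block system\<close>

lemma s_curvature_gt:
  assumes "pos_def \<Omega>" and "\<forall>j. a $ j > 0" and "\<forall>j. s $ j > 0"
  shows "a $ j * (s $ j)^2 < s_curvature \<Omega> a s $ j"
proof -
  have "0 < a $ j + \<Omega> $ j $ j + 1 / (s $ j)^2"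
    using assms(2,3) pos_def_diag_pos[OF assms(1), of j]
    by (intro add_pos_pos) (auto simp: less_imp_neq[symmetric])
  then show ?thesis
    by (simp add: s_curvature_def algebra_simps)
qed

lemma s_curvature_pos:
  assumes "pos_def \<Omega>" and "\<forall>j. a $ j > 0" and "\<forall>j. s $ j > 0"
  shows "0 < s_curvature \<Omega> a s $ j"
  using s_curvature_gt[OF assms, of j] assms(2,3)
  by (meson less_trans mult_pos_pos zero_less_power)

lemma pos_def_psi_hessian:
  fixes \<Omega> :: "real^'p::finite^'p"
  assumes "pos_def \<Omega>" and "\<forall>j. a $ j > 0" and "\<forall>j. s $ j > 0"
  shows "pos_def (psi_hessian \<Omega> a s)"
  unfolding pos_def_def
proof (intro allI impI)
  fix v :: "real^('p + 'p)"
  assume "v \<noteq> 0"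
  define u w where "u = inl_part v" and "w = inr_part v"
  define c where "c j = a $ j + \<Omega> $ j $ j + 1 / (s $ j)^2" for j
  define t where "t j = a $ j * (u $ j + s $ j * w $ j)^2 + c j * (w $ j)^2" for j
  have c_pos: "0 < c j" for j
    using assms(2,3) pos_def_diag_pos[OF assms(1), of j] unfolding c_def
    by (intro add_pos_pos) (auto simp: less_imp_neq[symmetric])
  have t_nonneg: "0 \<le> t j" for j
    using assms(2) c_pos[of j] by (simp add: t_def less_imp_le)
  have "a $ j * u $ j * u $ j + a $ j * s $ j * u $ j * w $ j + a $ j * s $ j * w $ j * u $ j
      + s_curvature \<Omega> a s $ j * w $ j * w $ j = t j" for j
    using assms(3) by (simp add: t_def c_def s_curvature_def power2_eq_square algebra_simps)
  then have t_sum: "sum t UNIV = (\<Sum>j\<in>UNIV. a $ j * u $ j * u $ j + a $ j * s $ j * u $ j * w $ j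
      + a $ j * s $ j * w $ j * u $ j + s_curvature \<Omega> a s $ j * w $ j * w $ j)"
    by (simp only:)
  have "v \<bullet> (psi_hessian \<Omega> a s *v v) = (\<Sum>j\<in>UNIV. a $ j * u $ j * u $ j) + u \<bullet> (\<Omega> *v u)
      + (\<Sum>j\<in>UNIV. a $ j * s $ j * u $ j * w $ j) + (\<Sum>j\<in>UNIV. a $ j * s $ j * w $ j * u $ j)
      + (\<Sum>j\<in>UNIV. s_curvature \<Omega> a s $ j * w $ j * w $ j)"
    by (simp add: psi_hessian_def inner_block_matrix matrix_vector_mult_add_rdistrib inner_add_right
        inner_Dg u_def w_def)
  also have "\<dots> = u \<bullet> (\<Omega> *v u) + sum t UNIV"
    by (simp only: t_sum sum.distrib)
  finally have quad: "v \<bullet> (psi_hessian \<Omega> a s *v v) = u \<bullet> (\<Omega> *v u) + sum t UNIV" .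
  consider "u \<noteq> 0" | "u = 0" "w \<noteq> 0"
    using \<open>v \<noteq> 0\<close> by (auto simp: block_vec_eq_0_iff u_def w_def)
  then show "0 < v \<bullet> (psi_hessian \<Omega> a s *v v)"
  proof cases
    case 1
    then have "0 < u \<bullet> (\<Omega> *v u)"
      using assms(1) by (simp add: pos_def_def)
    then show ?thesis
      using quad sum_nonneg[of UNIV t] t_nonneg by simp
  next
    case 2
    then obtain j where "w $ j \<noteq> 0"
      by (auto simp: vec_eq_iff)
    then have "0 < c j * (w $ j)^2"
      using c_pos[of j] by simp
    then have "0 < t j"
      using assms(2) unfolding t_def by (intro add_nonneg_pos) (simp_all add: less_imp_le)
    then have "0 < sum t UNIV"
      using t_nonneg by (intro sum_pos2) auto
    then show ?thesis
      using quad 2 by simp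
  qed
qed

lemma G_i_eq:
  assumes "pos_def \<Omega>" and "\<forall>j. a $ j > 0" and "\<forall>j. s $ j > 0"
  shows "G_i \<Omega> a s = Dg (\<chi> j. a $ j * (s $ j)^2 / s_curvature \<Omega> a s $ j)"
proof -
  let ?q = "s_curvature \<Omega> a s"
  have s_nz: "s $ j \<noteq> 0" for j
    using assms(3) by (metis less_irrefl)
  have Dg_r: "mat 1 + Dg (\<chi> j. (s $ j)^2) ** (Dg a + Dg a ** Dg (\<chi> j. (s $ j)^2) + diag_part \<Omega>)
      = Dg (\<chi> j. (s $ j)^2 * ?q $ j)"
    using s_nz by (simp add: vec_eq_iff Dg_nth mat_def diag_part_def s_curvature_def field_simps)
  then have "Lambda_i \<Omega> a s = Dg (\<chi> j. 1 / ((s $ j)^2 * ?q $ j)) ** Dg a ** Dg (\<chi> j. (s $ j)^2)"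
    unfolding Lambda_i_def Dg_r using s_nz s_curvature_pos[OF assms]
    by (subst matrix_inv_Dg) (auto simp: less_imp_neq[symmetric])
  then show ?thesis
    using s_nz by (simp add: G_i_def Dg_mult_Dg power2_eq_square mult_ac)
qed

definition Cinv_i :: "real^'p::finite^'p \<Rightarrow> real^'p \<Rightarrow> real^'p \<Rightarrow> real^'p^'p" where
  "Cinv_i \<Omega> a s =
     mat 1 + Dg (\<chi> j. 1 / sqrt (a $ j)) ** \<Omega> ** Dg (\<chi> j. 1 / sqrt (a $ j)) - G_i \<Omega> a s"

lemma pos_def_Cinv_i:
  fixes \<Omega> :: "real^'p::finite^'p"
  assumes "pos_def \<Omega>" and "\<forall>j. a $ j > 0" and "\<forall>j. s $ j > 0"
  shows "pos_def (Cinv_i \<Omega> a s)"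
  unfolding pos_def_def
proof (intro allI impI)
  fix v :: "real^'p"
  assume "v \<noteq> 0"
  define y where "y = Dg (\<chi> j. 1 / sqrt (a $ j)) *v v"
  define g where "g j = a $ j * (s $ j)^2 / s_curvature \<Omega> a s $ j" for j
  have g_lt: "g j < 1" for j
    using s_curvature_gt[OF assms, of j] s_curvature_pos[OF assms, of j]
    by (simp add: g_def divide_less_eq)
  have "v \<bullet> (Cinv_i \<Omega> a s *v v) = (\<Sum>j\<in>UNIV. (1 - g j) * (v $ j)^2) + y \<bullet> (\<Omega> *v y)"
    unfolding Cinv_i_def G_i_eq[OF assms] y_def
    by (simp add: matrix_vector_mult_add_rdistrib matrix_vector_mult_diff_rdistrib inner_add_right
        inner_diff_right matrix_vector_mul_assoc[symmetric] inner_Dg_commute[of v])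
      (simp add: g_def inner_vec_def Dg_mult_vec sum_subtractf algebra_simps power2_eq_square)
  moreover obtain j where "v $ j \<noteq> 0"
    using \<open>v \<noteq> 0\<close> by (auto simp: vec_eq_iff)
  then have "0 < (\<Sum>j\<in>UNIV. (1 - g j) * (v $ j)^2)"
    using g_lt by (intro sum_pos2[of _ j]) (auto simp: less_imp_le)
  ultimately show "0 < v \<bullet> (Cinv_i \<Omega> a s *v v)"
    using pos_def_nonneg[OF assms(1), of y] by simp
qed

lemma Cinv_i_mult_C_i:
  assumes "pos_def \<Omega>" and "\<forall>j. a $ j > 0" and "\<forall>j. s $ j > 0"
  shows "Cinv_i \<Omega> a s ** C_i \<Omega> a s = mat 1"
  unfolding C_i_def G_i_def[symmetric] Cinv_i_def[symmetric]
  by (subst matrix_left_right_inverse)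
    (rule matrix_inv_mult_self[OF pos_def_ker[OF pos_def_Cinv_i[OF assms]]])

lemma schur_complement_solution:
  fixes Q H G \<Omega> C :: "'a::comm_ring_1^'n::finite^'n"
  assumes QH: "Q ** H = mat 1" and HQ: "H ** Q = mat 1"
    and NC: "(mat 1 + H ** \<Omega> ** H - G) ** C = mat 1"
  shows "(Q ** Q + \<Omega> - Q ** G ** Q) ** (H ** C ** (mat 1 - G) ** Q) = Q ** (mat 1 - G) ** Q"
    and "Q ** (mat 1 - G) ** Q ** (H ** C ** (mat 1 - G) ** Q)
      = Q ** ((mat 1 - G) ** C ** (mat 1 - G)) ** Q"
proof -
  have cancel: "X ** Q ** H = X" "X ** H ** Q = X" "X ** (mat 1 + H ** \<Omega> ** H - G) ** C = X"
    for X :: "'a^'n^'n"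
    by (simp_all only: matrix_mul_assoc[symmetric, of X] QH HQ NC matrix_mul_rid)
  have "Q ** Q + \<Omega> - Q ** G ** Q = Q ** (mat 1 + H ** \<Omega> ** H - G) ** Q"
    by (simp add: matrix_add_ldistrib matrix_diff_ldistrib matrix_add_rdistrib matrix_diff_rdistrib
        matrix_mul_assoc cancel QH)
  then show "(Q ** Q + \<Omega> - Q ** G ** Q) ** (H ** C ** (mat 1 - G) ** Q) = Q ** (mat 1 - G) ** Q"
    by (simp add: matrix_mul_assoc cancel)
  show "Q ** (mat 1 - G) ** Q ** (H ** C ** (mat 1 - G) ** Q)
      = Q ** ((mat 1 - G) ** C ** (mat 1 - G)) ** Q"
    by (simp add: matrix_mul_assoc cancel)
qed

lemma Dg_sqrt_G_i_Dg_sqrt: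
  assumes "pos_def \<Omega>" and "\<forall>j. a $ j > 0" and "\<forall>j. s $ j > 0"
  shows "Dg (\<chi> j. sqrt (a $ j)) ** G_i \<Omega> a s ** Dg (\<chi> j. sqrt (a $ j))
    = Dg (\<chi> j. a $ j * s $ j) ** Dg (\<chi> j. s $ j * a $ j / s_curvature \<Omega> a s $ j)"
  using assms(2)
  by (simp add: G_i_eq[OF assms] Dg_mult_Dg power2_eq_square mult_ac less_imp_le)

lemma psi_hessian_solve:
  fixes \<Omega> :: "real^'p::finite^'p"
  assumes "pos_def \<Omega>" and "\<forall>j. a $ j > 0" and "\<forall>j. s $ j > 0"
  obtains X1 X2 where "(Dg a + \<Omega>) ** X1 + Dg (\<chi> j. a $ j * s $ j) ** X2 = Dg a"
    and "Dg (\<chi> j. a $ j * s $ j) ** X1 + Dg (s_curvature \<Omega> a s) ** X2 = Dg (\<chi> j. a $ j * s $ j)"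
    and "Dg a ** X1 + Dg (\<chi> j. a $ j * s $ j) ** X2
      = Dg (\<chi> j. sqrt (a $ j)) ** E_i \<Omega> a s ** Dg (\<chi> j. sqrt (a $ j))"
proof -
  define Q H where "Q = Dg (\<chi> j. sqrt (a $ j))" and "H = Dg (\<chi> j. 1 / sqrt (a $ j))"
  define G C q where "G = G_i \<Omega> a s" and "C = C_i \<Omega> a s" and "q = s_curvature \<Omega> a s"
  define X1 where "X1 = H ** C ** (mat 1 - G) ** Q"
  define X2 where "X2 = Dg (\<chi> j. s $ j * a $ j / q $ j) ** (mat 1 - X1)"
  note QH = Dg_sqrt(1)[OF assms(2), folded Q_def H_def]
    and HQ = Dg_sqrt(2)[OF assms(2), folded Q_def H_def]
    and QQ = Dg_sqrt(3)[OF assms(2), folded Q_def]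
  note schur = schur_complement_solution[OF QH HQ
      Cinv_i_mult_C_i[OF assms, unfolded Cinv_i_def, folded H_def G_def C_def], folded X1_def]
  have QGQ: "Q ** (mat 1 - G) ** Q = Dg a - Q ** G ** Q"
    by (simp add: QQ matrix_diff_ldistrib matrix_diff_rdistrib)
  have X2_eq: "Dg (\<chi> j. a $ j * s $ j) ** X2 = Q ** G ** Q - Q ** G ** Q ** X1"
    using Dg_sqrt_G_i_Dg_sqrt[OF assms]
    by (simp add: X2_def matrix_mul_assoc matrix_diff_ldistrib Q_def G_def q_def)
  have q_eq: "Dg q ** Dg (\<chi> j. s $ j * a $ j / q $ j) = Dg (\<chi> j. a $ j * s $ j)"
    using s_curvature_pos[OF assms] by (simp add: q_def Dg_mult_Dg less_imp_neq[symmetric] mult_ac)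
  have "(Dg a + \<Omega>) ** X1 + Dg (\<chi> j. a $ j * s $ j) ** X2
      = (Q ** Q + \<Omega> - Q ** G ** Q) ** X1 + Q ** G ** Q"
    by (simp add: X2_eq QQ matrix_add_rdistrib matrix_diff_rdistrib)
  also have "\<dots> = Dg a"
    using schur(1) by (simp add: QGQ)
  finally have m_block: "(Dg a + \<Omega>) ** X1 + Dg (\<chi> j. a $ j * s $ j) ** X2 = Dg a" .
  have s_block: "Dg (\<chi> j. a $ j * s $ j) ** X1 + Dg q ** X2 = Dg (\<chi> j. a $ j * s $ j)"
    by (simp add: X2_def matrix_mul_assoc q_eq matrix_diff_ldistrib)
  have "Dg a ** X1 + Dg (\<chi> j. a $ j * s $ j) ** X2 = Q ** G ** Q + Q ** (mat 1 - G) ** Q ** X1"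
    by (simp add: X2_eq QGQ matrix_diff_rdistrib)
  also have "\<dots> = Q ** E_i \<Omega> a s ** Q"
    using schur(2) by (simp add: E_i_def matrix_add_ldistrib matrix_add_rdistrib flip: G_def C_def)
  finally show ?thesis
    using that m_block s_block by (simp add: q_def Q_def)
qed

lemma psi_B_coupling_inv_psi_hessian:
  assumes "pos_def \<Omega>" and "\<forall>j. a $ j > 0" and "\<forall>j. s $ j > 0"
  shows "psi_B_coupling a s ** matrix_inv (psi_hessian \<Omega> a s) ** transpose (psi_B_coupling a s)
    = Dg (\<chi> j. sqrt (a $ j)) ** E_i \<Omega> a s ** Dg (\<chi> j. sqrt (a $ j))"
proof -
  obtain X1 X2 where m_block: "(Dg a + \<Omega>) ** X1 + Dg (\<chi> j. a $ j * s $ j) ** X2 = Dg a"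
    and s_block: "Dg (\<chi> j. a $ j * s $ j) ** X1 + Dg (s_curvature \<Omega> a s) ** X2 = Dg (\<chi> j. a $ j * s $ j)"
    and L_block: "Dg a ** X1 + Dg (\<chi> j. a $ j * s $ j) ** X2
      = Dg (\<chi> j. sqrt (a $ j)) ** E_i \<Omega> a s ** Dg (\<chi> j. sqrt (a $ j))"
    using psi_hessian_solve[OF assms] .
  have "psi_hessian \<Omega> a s ** block_col X1 X2 = transpose (psi_B_coupling a s)"
    by (simp add: psi_hessian_def psi_B_coupling_def block_matrix_mult_block_col transpose_block_row
        m_block s_block)
  then have "matrix_inv (psi_hessian \<Omega> a s) ** transpose (psi_B_coupling a s) = block_col X1 X2"
    using pos_def_ker[OF pos_def_psi_hessian[OF assms]] by (intro matrix_inv_mult_eqI)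
  then show ?thesis
    by (simp add: psi_B_coupling_def block_row_mult_block_col L_block flip: matrix_mul_assoc)
qed

theorem proposition9:
  fixes Y :: "nat^'p" and off :: "real^'p" and x :: "real^'m"
    and B :: "real^'p^'m" and \<Omega> :: "real^'p^'p" and m s :: "real^'p"
  assumes "transpose \<Omega> = \<Omega>" and "pos_def \<Omega>"
    and "\<forall>j. s $ j > 0"
  shows "(let F = ELBOv Y off x \<Omega>; b = vecB B; \<psi> = psi_of m s; a = atil off x B m s in
     hess_Bpsi F b \<psi> ** matrix_inv (hess_psipsi F b \<psi>) ** hess_psiB F b \<psi>
     = - kron (Dg (\<chi> j. sqrt (a$j)) ** E_i \<Omega> a s ** Dg (\<chi> j. sqrt (a$j))) (outer x))"
proof -
  define a where "a = atil off x B m s"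
  define K where "K = kron_vec (psi_B_coupling a s) x"
  have a_pos: "\<forall>j. a $ j > 0"
    by (simp add: a_def atil_def)
  note M_ker = pos_def_ker[OF pos_def_psi_hessian[OF assms(2) a_pos assms(3)]]
  have "hess_Bpsi (ELBOv Y off x \<Omega>) (vecB B) (psi_of m s)
      ** matrix_inv (hess_psipsi (ELBOv Y off x \<Omega>) (vecB B) (psi_of m s))
      ** hess_psiB (ELBOv Y off x \<Omega>) (vecB B) (psi_of m s)
    = - (K ** matrix_inv (psi_hessian \<Omega> a s) ** transpose K)"
    by (simp add: hess_Bpsi_ELBOv hess_psipsi_ELBOv hess_psiB_ELBOv assms matrix_inv_uminus M_ker
        flip: a_def K_def)
  also have "\<dots> = - kron (Dg (\<chi> j. sqrt (a $ j)) ** E_i \<Omega> a s ** Dg (\<chi> j. sqrt (a $ j))) (outer x)"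
    by (simp add: K_def kron_vec_mult_transpose
        psi_B_coupling_inv_psi_hessian[OF assms(2) a_pos assms(3)])
  finally show ?thesis
    by (simp add: a_def)
qed

end
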